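(* Let $k\ge2$ and $\mathcal{R}=\mathbb{C}[\xi_0,\xi_1,\xi_2,\xi_3]$. The sequence $\mathcal{R}^{k+1}\xleftarrow{D_0^{(k)}(\xi)^t}\mathcal{R}^{2k}\xleftarrow{D_1^{(k)}(\xi)^t}\mathcal{R}^{k-1}$ is exact, i.e. $\ker D_0^{(k)}(\xi)^t=\operatorname{Im}D_1^{(k)}(\xi)^t$ in $\mathcal{R}^{2k}$.
   Context: Put $a=\frac1i(\xi_0-i\xi_1)$, $c=\frac1i(\xi_0+i\xi_1)$, $b=\frac1i(\xi_2-i\xi_3)$, $d=\frac1i(\xi_2+i\xi_3)$ (polynomials in $\mathcal{R}$). $D_0^{(k)}(\xi)$ is the $(2k)\times(k+1)$ polynomial matrix whose row $2j$ ($j=0,\dots,k-1$, indices from $0$) has $-d$ in column $j$ and $-c$ in column $j+1$, and whose row $2j+1$ has $a$ in column $j$ and $-b$ in column $j+1$, all other entries $0$. $D_1^{(k)}(\xi)$ is the $(k-1)\times(2k)$ matrix whose row $j$ ($j=0,\dots,k-2$) has $-a,-d,b,-c$ in columns $2j,2j+1,2j+2,2j+3$ and zeros elsewhere. $t$ denotes transpose; the matrices act on column vectors of polynomials. *)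

theory Defs
  imports "HOL-Computational_Algebra.Polynomial" "Jordan_Normal_Form.Matrix"
begin

text \<open>The polynomial ring C[xi0,xi1,xi2,xi3], represented as iterated univariate
  polynomials: xi3 is the outermost variable, xi0 the innermost.\<close>
type_synonym R4 = "complex poly poly poly poly"

definition cst :: "complex \<Rightarrow> R4" where
  "cst c = [:[:[:[:c:]:]:]:]"

definition xi0 :: R4 where "xi0 = [:[:[:[:0, 1:]:]:]:]"
definition xi1 :: R4 where "xi1 = [:[:[:0, 1:]:]:]"
definition xi2 :: R4 where "xi2 = [:[:0, 1:]:]"
definition xi3 :: R4 where "xi3 = [:0, 1:]"

definition pa :: R4 where "pa = cst (1 / \<i>) * (xi0 - cst \<i> * xi1)"
definition pc :: R4 where "pc = cst (1 / \<i>) * (xi0 + cst \<i> * xi1)"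
definition pb :: R4 where "pb = cst (1 / \<i>) * (xi2 - cst \<i> * xi3)"
definition pd :: R4 where "pd = cst (1 / \<i>) * (xi2 + cst \<i> * xi3)"

definition D0 :: "nat \<Rightarrow> R4 mat" where
  "D0 k = mat (2 * k) (k + 1) (\<lambda>(r, s).
     (let j = r div 2 in
      if even r then (if s = j then - pd else if s = j + 1 then - pc else 0)
      else (if s = j then pa else if s = j + 1 then - pb else 0)))"

definition D1 :: "nat \<Rightarrow> R4 mat" where
  "D1 k = mat (k - 1) (2 * k) (\<lambda>(j, s).
     if s = 2 * j then - pa else if s = 2 * j + 1 then - pd
     else if s = 2 * j + 2 then pb else if s = 2 * j + 3 then - pc else 0)"

end

theory Submission
  imports Defs
begin

text \<open>Put \<open>K = ac + bd\<close>. Say that \<open>v\<close> is generated by \<open>W\<^sub>0, \<dots>, W\<^sub>k\<close> if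
  \<open>v(2j) = -a W(j+1) + b W(j)\<close> and \<open>v(2j+1) = -d W(j+1) - c W(j)\<close>; the image of \<open>D\<^sub>1\<^sup>t\<close>
  consists of the vectors generated with \<open>W\<^sub>0 = W\<^sub>k = 0\<close>. For a generated vector,
  entry \<open>s\<close> of \<open>D\<^sub>0\<^sup>t v\<close> is \<open>-K W(s) + K W(s)\<close> up to boundary terms, so \<open>D\<^sub>0\<^sup>t D\<^sub>1\<^sup>t = 0\<close>.
  Conversely, if \<open>D\<^sub>0\<^sup>t v = 0\<close>, build \<open>W\<close> inductively: entry \<open>n\<close> of \<open>D\<^sub>0\<^sup>t v\<close> says
  \<open>d (v(2n) - b W(n)) = a (v(2n+1) + c W(n))\<close>; as \<open>d = \<xi>\<^sub>3 - i\<xi>\<^sub>2\<close> is monic linear in \<open>\<xi>\<^sub>3\<close>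
  and \<open>a\<close> does not vanish on \<open>\<xi>\<^sub>3 = i\<xi>\<^sub>2\<close>, both sides are \<open>a d u\<close> for some \<open>u\<close>, and
  \<open>W(n+1) = -u\<close> works. The last entry of \<open>D\<^sub>0\<^sup>t v\<close> is \<open>K W(k)\<close>, and \<open>K \<noteq> 0\<close> gives \<open>W(k) = 0\<close>.\<close>

lemma linear_factor_syzygy:
  fixes e :: "'a::idom" and q x y :: "'a poly"
  assumes q: "poly q e \<noteq> 0" and eq: "[:-e, 1:] * x = q * y"
  shows "\<exists>u. x = q * u \<and> y = [:-e, 1:] * u"
proof -
  define p where "p = [:-e, 1:]"
  have "poly (q * y) e = 0" by (simp flip: eq)
  with q have "p dvd y" by (simp add: poly_eq_0_iff_dvd p_def)
  then obtain u where y: "y = p * u" by (elim dvdE)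
  have "p \<noteq> 0" by (simp add: p_def)
  moreover from eq have "p * x = p * (q * u)" by (simp add: y p_def mult.left_commute)
  ultimately have "x = q * u" by simp
  with y show ?thesis unfolding p_def by blast
qed

lemma sum_two_deltas:
  "(\<Sum>i<n. (if i = j then f i else 0) + (if Suc i = j then g i else 0))
   = (if j < n then f j else 0) + (if 0 < j \<and> j \<le> n then g (j - 1) else 0)"
  for f g :: "nat \<Rightarrow> 'a::comm_monoid_add"
proof -
  have "(\<Sum>i<n. if Suc i = j then g i else 0) = (\<Sum>i<n. if i = j - 1 \<and> 0 < j then g i else 0)"
    by (intro sum.cong) auto
  then show ?thesis by (auto simp: sum.distrib)
qed

lemma sum_in_pairs: "(\<Sum>r<2 * n. f r) = (\<Sum>j<n. f (2 * j) + f (2 * j + 1))"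
  for f :: "nat \<Rightarrow> 'a::comm_monoid_add"
  by (induction n) (simp_all add: add.assoc)

lemma pair_identities:
  fixes a b c d x y V W :: "'a::comm_ring_1"
  assumes "x = - a * W + b * V" "y = - d * W - c * V"
  shows "- d * x + a * y = - (a * c + b * d) * V"
    and "- c * x - b * y = (a * c + b * d) * W"
  unfolding assms by (simp_all add: algebra_simps)

lemma pa_eq: "pa = [:[:[:[:0, -\<i>:]:]:] - [:[:0, 1:]:]:]"
  unfolding pa_def cst_def xi0_def xi1_def by (simp add: one_pCons)

lemma pb_eq: "pb = [:- ([:[:[:\<i>:]:]:] * [:0, 1:]), -1:]"
  unfolding pb_def cst_def xi2_def xi3_def by (simp add: one_pCons)

lemma pc_eq: "pc = [:[:[:[:0, -\<i>:]:]:] + [:[:0, 1:]:]:]"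
  unfolding pc_def cst_def xi0_def xi1_def by (simp add: one_pCons)

lemma pd_eq: "pd = [:- ([:[:[:\<i>:]:]:] * [:0, 1:]), 1:]"
  unfolding pd_def cst_def xi2_def xi3_def by (simp add: one_pCons)

lemma pd_pa_syzygy:
  assumes "pd * x = pa * y"
  shows "\<exists>u. x = pa * u \<and> y = pd * u"
proof -
  have "poly pa ([:[:[:\<i>:]:]:] * [:0, 1:]) \<noteq> 0"
    by (simp add: pa_eq)
  from linear_factor_syzygy[OF this assms[unfolded pd_eq]] show ?thesis
    unfolding pd_eq .
qed

lemma ac_plus_bd_nonzero: "pa * pc + pb * pd \<noteq> 0"
  \<comment> \<open>its coefficient of \<open>\<xi>\<^sub>3\<^sup>2\<close> is \<open>-1\<close>\<close>
proof
  assume "pa * pc + pb * pd = 0"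
  then have "coeff (pa * pc + pb * pd) 2 = 0" by simp
  then show False
    by (simp add: pa_eq pb_eq pc_eq pd_eq numeral_2_eq_2)
qed

lemma D0t_nth:
  assumes v: "v \<in> carrier_vec (2 * k)" and s: "s \<le> k"
  shows "(transpose_mat (D0 k) *\<^sub>v v) $ s =
    (if s < k then - pd * v $ (2 * s) + pa * v $ (2 * s + 1) else 0)
    + (if 0 < s then - pc * v $ (2 * (s - 1)) - pb * v $ (2 * (s - 1) + 1) else 0)"
proof -
  have "(transpose_mat (D0 k) *\<^sub>v v) $ s = (\<Sum>r<2 * k. D0 k $$ (r, s) * v $ r)"
    using v s by (simp add: scalar_prod_def D0_def atLeast0LessThan)
  also have "\<dots> = (\<Sum>j<k. (if j = s then - pd * v $ (2 * j) + pa * v $ (2 * j + 1) else 0)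
      + (if Suc j = s then - pc * v $ (2 * j) - pb * v $ (2 * j + 1) else 0))"
    unfolding sum_in_pairs using s by (intro sum.cong) (auto simp: D0_def)
  finally show ?thesis
    using s by (simp add: sum_two_deltas)
qed

definition zero_padded :: "nat \<Rightarrow> R4 vec \<Rightarrow> nat \<Rightarrow> R4" where
  "zero_padded k w i = (if 0 < i \<and> i < k then w $ (i - 1) else 0)"

lemma D1t_nth:
  assumes w: "w \<in> carrier_vec (k - 1)" and j: "j < k"
  shows "(transpose_mat (D1 k) *\<^sub>v w) $ (2 * j) =
      - pa * zero_padded k w (Suc j) + pb * zero_padded k w j"
    and "(transpose_mat (D1 k) *\<^sub>v w) $ (2 * j + 1) =
      - pd * zero_padded k w (Suc j) - pc * zero_padded k w j"
proof -
  have "(transpose_mat (D1 k) *\<^sub>v w) $ (2 * j) = (\<Sum>i<k - 1. D1 k $$ (i, 2 * j) * w $ i)"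
    using w j by (simp add: scalar_prod_def D1_def atLeast0LessThan)
  also have "\<dots> = (\<Sum>i<k - 1. (if i = j then - pa * w $ i else 0)
      + (if Suc i = j then pb * w $ i else 0))"
    using j by (intro sum.cong) (auto simp: D1_def)
  finally show "(transpose_mat (D1 k) *\<^sub>v w) $ (2 * j) =
      - pa * zero_padded k w (Suc j) + pb * zero_padded k w j"
    using j by (auto simp: sum_two_deltas zero_padded_def)
  have "(transpose_mat (D1 k) *\<^sub>v w) $ (2 * j + 1) = (\<Sum>i<k - 1. D1 k $$ (i, 2 * j + 1) * w $ i)"
    using w j by (simp add: scalar_prod_def D1_def atLeast0LessThan)
  also have "\<dots> = (\<Sum>i<k - 1. (if i = j then - pd * w $ i else 0)
      + (if Suc i = j then - pc * w $ i else 0))"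
    using j by (intro sum.cong) (auto simp: D1_def)
  finally show "(transpose_mat (D1 k) *\<^sub>v w) $ (2 * j + 1) =
      - pd * zero_padded k w (Suc j) - pc * zero_padded k w j"
    using j by (auto simp: sum_two_deltas zero_padded_def)
qed

lemma D1t_carrier: "transpose_mat (D1 k) *\<^sub>v w \<in> carrier_vec (2 * k)"
  by (simp add: D1_def carrier_vecI)

definition pairs_from :: "(nat \<Rightarrow> R4) \<Rightarrow> nat \<Rightarrow> R4 vec \<Rightarrow> bool" where
  "pairs_from W n v \<longleftrightarrow> (\<forall>j<n.
     v $ (2 * j) = - pa * W (Suc j) + pb * W j \<and> v $ (2 * j + 1) = - pd * W (Suc j) - pc * W j)"

lemma pairs_from_D1t:
  "w \<in> carrier_vec (k - 1) \<Longrightarrow> pairs_from (zero_padded k w) k (transpose_mat (D1 k) *\<^sub>v w)"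
  unfolding pairs_from_def using D1t_nth by blast

lemma pairs_from_unique:
  assumes "v \<in> carrier_vec (2 * n)" "v' \<in> carrier_vec (2 * n)"
    and "pairs_from W n v" "pairs_from W' n v'" and "\<And>i. i \<le> n \<Longrightarrow> W i = W' i"
  shows "v = v'"
proof (rule eq_vecI)
  show "dim_vec v = dim_vec v'" using assms(1,2) by simp
  fix r assume "r < dim_vec v'"
  with assms(2) obtain j where j: "j < n" and r: "r = 2 * j \<or> r = 2 * j + 1"
    by (intro that[of "r div 2"]) auto
  with assms(5) have "W j = W' j" "W (Suc j) = W' (Suc j)" by auto
  with j r assms(3,4) show "v $ r = v' $ r"
    unfolding pairs_from_def by auto
qed

lemma D0t_nth_pairs_from:
  assumes v: "v \<in> carrier_vec (2 * k)" and W: "pairs_from W n v" "W 0 = 0"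
    and s: "s \<le> k" "s \<le> n"
  shows "(transpose_mat (D0 k) *\<^sub>v v) $ s =
    (if s < k then - pd * v $ (2 * s) + pa * v $ (2 * s + 1) else 0) + (pa * pc + pb * pd) * W s"
proof (cases s)
  case (Suc t)
  with W s have "- pc * v $ (2 * t) - pb * v $ (2 * t + 1) = (pa * pc + pb * pd) * W s"
    unfolding pairs_from_def by (intro pair_identities(2)) auto
  with Suc D0t_nth[OF v s(1)] show ?thesis by simp
qed (use D0t_nth[OF v s(1)] W in simp)

lemma D0t_D1t_zero:
  assumes w: "w \<in> carrier_vec (k - 1)"
  shows "transpose_mat (D0 k) *\<^sub>v (transpose_mat (D1 k) *\<^sub>v w) = 0\<^sub>v (k + 1)"
proof (rule eq_vecI)
  define v where "v = transpose_mat (D1 k) *\<^sub>v w"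
  define W where "W = zero_padded k w"
  have v: "v \<in> carrier_vec (2 * k)" unfolding v_def by (rule D1t_carrier)
  have W: "pairs_from W k v" using pairs_from_D1t[OF w] by (simp add: v_def W_def)
  have "W 0 = 0" "W k = 0" by (simp_all add: W_def zero_padded_def)
  fix s assume "s < dim_vec (0\<^sub>v (k + 1) :: R4 vec)"
  then have s: "s \<le> k" by simp
  have "(if s < k then - pd * v $ (2 * s) + pa * v $ (2 * s + 1) else 0)
      = - (pa * pc + pb * pd) * W s"
  proof (cases "s < k")
    case True
    with W have "v $ (2 * s) = - pa * W (Suc s) + pb * W s"
      "v $ (2 * s + 1) = - pd * W (Suc s) - pc * W s"
      unfolding pairs_from_def by auto
    from pair_identities(1)[OF this] True show ?thesis by simp
  qed (use \<open>W k = 0\<close> s in simp)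
  with D0t_nth_pairs_from[OF v W \<open>W 0 = 0\<close> s s]
  show "(transpose_mat (D0 k) *\<^sub>v v) $ s = 0\<^sub>v (k + 1) $ s"
    using s by (simp add: algebra_simps)
qed (simp add: D0_def)

lemma D0t_kernel_pairs_from:
  assumes v: "v \<in> carrier_vec (2 * k)" and ker: "transpose_mat (D0 k) *\<^sub>v v = 0\<^sub>v (k + 1)"
    and "n \<le> k"
  shows "\<exists>W. W 0 = 0 \<and> pairs_from W n v"
  using \<open>n \<le> k\<close>
proof (induction n)
  case 0
  show ?case by (auto simp: pairs_from_def)
next
  case (Suc n)
  then obtain W where W: "W 0 = 0" "pairs_from W n v" by auto
  define K where "K = pa * pc + pb * pd"
  from Suc.prems have "n < k" by simp
  with ker D0t_nth_pairs_from[OF v W(2) W(1), of n]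
  have "- pd * v $ (2 * n) + pa * v $ (2 * n + 1) + K * W n = 0"
    by (simp add: K_def)
  moreover have "pd * (v $ (2 * n) - pb * W n) - pa * (v $ (2 * n + 1) + pc * W n)
      = - (- pd * v $ (2 * n) + pa * v $ (2 * n + 1) + K * W n)"
    by (simp add: K_def algebra_simps)
  ultimately have "pd * (v $ (2 * n) - pb * W n) = pa * (v $ (2 * n + 1) + pc * W n)"
    by simp
  then obtain u where "v $ (2 * n) - pb * W n = pa * u" "v $ (2 * n + 1) + pc * W n = pd * u"
    using pd_pa_syzygy by blast
  then have u: "v $ (2 * n) = pa * u + pb * W n" "v $ (2 * n + 1) = pd * u - pc * W n"
    by (simp_all add: diff_eq_eq eq_diff_eq)
  have "pairs_from (W(Suc n := - u)) (Suc n) v"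
    using W(2) u unfolding pairs_from_def by (auto simp: less_Suc_eq)
  moreover have "(W(Suc n := - u)) 0 = 0" using W(1) by simp
  ultimately show ?case by blast
qed

lemma D0t_kernel_in_D1t_image:
  assumes v: "v \<in> carrier_vec (2 * k)" and ker: "transpose_mat (D0 k) *\<^sub>v v = 0\<^sub>v (k + 1)"
  shows "\<exists>w \<in> carrier_vec (k - 1). v = transpose_mat (D1 k) *\<^sub>v w"
proof -
  obtain W where W: "W 0 = 0" "pairs_from W k v"
    using D0t_kernel_pairs_from[OF v ker] by blast
  have "(pa * pc + pb * pd) * W k = 0"
    using ker D0t_nth_pairs_from[OF v W(2) W(1), of k] by simp
  then have "W k = 0" using ac_plus_bd_nonzero by simp
  define w where "w = vec (k - 1) (\<lambda>i. W (Suc i))"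
  have w: "w \<in> carrier_vec (k - 1)" by (simp add: w_def)
  have "zero_padded k w i = W i" if "i \<le> k" for i
    using that W(1) \<open>W k = 0\<close> by (cases i) (auto simp: zero_padded_def w_def)
  then have "v = transpose_mat (D1 k) *\<^sub>v w"
    using pairs_from_unique[OF v D1t_carrier W(2) pairs_from_D1t[OF w]] by simp
  with w show ?thesis by blast
qed

theorem proposition4p1:
  fixes k :: nat
  assumes "k \<ge> 2"
  shows "{v \<in> carrier_vec (2 * k). transpose_mat (D0 k) *\<^sub>v v = 0\<^sub>v (k + 1)}
       = {transpose_mat (D1 k) *\<^sub>v w | w. w \<in> carrier_vec (k - 1)}"
proof (intro equalityI subsetI)
  fix v assume "v \<in> {v \<in> carrier_vec (2 * k). transpose_mat (D0 k) *\<^sub>v v = 0\<^sub>v (k + 1)}"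
  then obtain w where "w \<in> carrier_vec (k - 1)" "v = transpose_mat (D1 k) *\<^sub>v w"
    using D0t_kernel_in_D1t_image by blast
  then show "v \<in> {transpose_mat (D1 k) *\<^sub>v w | w. w \<in> carrier_vec (k - 1)}" by blast
next
  fix v assume "v \<in> {transpose_mat (D1 k) *\<^sub>v w | w. w \<in> carrier_vec (k - 1)}"
  then obtain w where w: "w \<in> carrier_vec (k - 1)" and v: "v = transpose_mat (D1 k) *\<^sub>v w"
    by blast
  have "v \<in> carrier_vec (2 * k)" unfolding v by (rule D1t_carrier)
  with D0t_D1t_zero[OF w]
  show "v \<in> {v \<in> carrier_vec (2 * k). transpose_mat (D0 k) *\<^sub>v v = 0\<^sub>v (k + 1)}"
    unfolding v by blast
qed

end
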